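(* Z-light-first order is energy-bound: for every constant $\Delta\ge1$ there is a constant $C$ (depending only on $\Delta$) such that for every rooted tree $T$ with $n$ vertices, every vertex having at most $\Delta$ children, stored in Z-light-first order, the total energy $\sum_{v}\sum_{c \text{ child of } v} \mathrm{dist}(p_v,p_c)$ of every vertex sending a message to each of its children is at most $C n$.
   Context: Processors sit on the cells of a two-dimensional grid; sending a message between processors at $(x_1,y_1)$ and $(x_2,y_2)$ costs energy $|x_1-x_2|+|y_1-y_2|$. Z-order (Morton order) is the enumeration of grid cells $(x,y)$, $x,y\in\{0,\dots,2^m-1\}$, in which the cell at position $i$ (counting from $0$) has $x$ equal to the number formed by the even-indexed bits of $i$ and $y$ equal to the number formed by the odd-indexed bits of $i$ (bit $2t$ of $i$ is bit $t$ of $x$, bit $2t+1$ of $i$ is bit $t$ of $y$). $\mathrm{dist}(i,j)$ is the energy of sending a message from the processor at position $i$ to the one at position $j$. Light-first order: each tree vertex $v$ is stored in one processor at position $p_v$ (root at the first position). Let $s(v)$ be the size of the subtree rooted at $v$. For each vertex $v$ with children indexed $c_1,\dots,c_d$ with $s(c_1)\le\dots\le s(c_d)$, child $c_i$ is stored at position $p_v+1+\sum_{j=1}^{i-1}s(c_j)$. Z-light-first order is light-first order with respect to Z-order. *)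

theory Defs
  imports Complex_Main
begin

text \<open>Coordinates of the cell at Z-order position i: x collects the even-indexed
bits of i, y the odd-indexed bits. (Independent of the grid exponent m,
as long as i < 4^m.)\<close>

fun zx :: "nat \<Rightarrow> nat" where
  "zx i = (if i = 0 then 0 else i mod 2 + 2 * zx (i div 4))"

fun zy :: "nat \<Rightarrow> nat" where
  "zy i = (if i = 0 then 0 else (i div 2) mod 2 + 2 * zy (i div 4))"

declare zx.simps[simp del] zy.simps[simp del]

definition zdist :: "nat \<Rightarrow> nat \<Rightarrow> nat" where
  "zdist i j = nat \<bar>int (zx i) - int (zx j)\<bar> + nat \<bar>int (zy i) - int (zy j)\<bar>"

datatype tree = Node "tree list"

fun tsize :: "tree \<Rightarrow> nat" where
  "tsize (Node cs) = 1 + sum_list (map tsize cs)"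

fun max_children :: "nat \<Rightarrow> tree \<Rightarrow> bool" where
  "max_children d (Node cs) = (length cs \<le> d \<and> (\<forall>c\<in>set cs. max_children d c))"

fun light_first :: "tree \<Rightarrow> bool" where
  "light_first (Node cs) = (sorted (map tsize cs) \<and> (\<forall>c\<in>set cs. light_first c))"

text \<open>Energy of the light-first layout: vertex stored at position p, its
children stored consecutively starting at p+1, each child c_i at
p + 1 + sum of sizes of the earlier children; each vertex sends one message
to each of its children.  energy_list p q cs: parent at p, next child at q.\<close>
fun energy :: "nat \<Rightarrow> tree \<Rightarrow> nat"
and energy_list :: "nat \<Rightarrow> nat \<Rightarrow> tree list \<Rightarrow> nat" where
  "energy p (Node cs) = energy_list p (Suc p) cs"
| "energy_list p q [] = 0"
| "energy_list p q (c # cs) = zdist p q + energy q c + energy_list p (q + tsize c) cs"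

end

theory Submission
  imports Defs
begin

(* Light-first order lets few edges cross a fixed position m.  Follow m down the tree:
   at each vertex only the edges to children stored at or after m cross it, at most \<Delta> of
   them, and the walk continues into the child whose subtree contains m.  Unless that child
   is the last one, a later sibling is at least as large, so it holds at most half of the
   subtree.  Hence a subtree of size at most 2^k has at most \<Delta>(k+1) edges crossing m, and
   at most \<Delta>(k+2) edges of length below B <= 2^k cross m: once the child containing m has
   size at least B, the edges to its later siblings are too long.

   An edge (a, b), a < b, is charged to the boundary m = (b div 4^L) 4^L, where L + 1 is the
   least level at which a and b lie in one aligned block of 4^(L+1) positions.  In Z-order
   that block is a square of side 2^(L+1), so the edge costs less than 4 2^L, and it crosses m
   with length below 4^(L+1).  Level L has fewer than n / 4^L boundaries, so the energy is at
   most the sum over L of (n / 4^L) 4 2^L \<Delta>(2L + 4), which is at most 48 \<Delta> n. *)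

lemma zx_0 [simp]: "zx 0 = 0" and zy_0 [simp]: "zy 0 = 0"
  by (simp_all add: zx.simps zy.simps)

lemma zx_rec: "zx i = i mod 2 + 2 * zx (i div 4)"
  by (cases "i = 0") (simp_all add: zx.simps[of i])

lemma zy_rec: "zy i = i div 2 mod 2 + 2 * zy (i div 4)"
  by (cases "i = 0") (simp_all add: zy.simps[of i])

lemma zx_div_pow2: "zx i div 2^K = zx (i div 4^K)"
proof (induction K arbitrary: i)
  case (Suc K)
  have "zx i div 2^Suc K = zx i div 2 div 2^K"
    by (simp add: div_mult2_eq)
  also have "\<dots> = zx (i div 4 div 4^K)"
    by (subst zx_rec) (simp add: Suc.IH)
  finally show ?case
    by (simp add: div_mult2_eq)
qed simp

lemma zy_eq_zx_div_2: "zy i = zx (i div 2)"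
proof (induction i rule: less_induct)
  case (less i)
  show ?case
  proof (cases "i = 0")
    case False
    have "i div 4 div 2 = i div 2 div 4"
      by (metis div_mult2_eq mult.commute)
    then have "zy i = i div 2 mod 2 + 2 * zx (i div 2 div 4)"
      using zy_rec[of i] less.IH[of "i div 4"] False by simp
    then show ?thesis
      using zx_rec[of "i div 2"] by simp
  qed simp
qed

lemma lt_add_of_div_eq:
  fixes x y d :: nat
  assumes "x div d = y div d" and "0 < d"
  shows "x < y + d"
proof -
  have "x < x div d * d + d"
    using div_mult_mod_eq[of x d] mod_less_divisor[OF assms(2), of x] by linarith
  also have "\<dots> \<le> y + d"
    using assms(1) div_times_less_eq_dividend[of y d] by simp
  finally show ?thesis .
qed

lemma zx_lt_of_same_block: "i div 4^K = j div 4^K \<Longrightarrow> zx i < zx j + 2^K"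
  by (rule lt_add_of_div_eq) (simp_all add: zx_div_pow2)

lemma zy_lt_of_same_block:
  assumes "i div 4^K = j div 4^K"
  shows "zy i < zy j + 2^K"
proof -
  have "i div 2 div 4^K = j div 2 div 4^K"
    using assms by (metis div_mult2_eq mult.commute)
  then show ?thesis
    by (simp add: zy_eq_zx_div_2 zx_lt_of_same_block)
qed

lemma zdist_lt_of_same_block:
  assumes "i div 4^K = j div 4^K"
  shows "zdist i j < 2 * 2^K"
  using zx_lt_of_same_block[OF assms] zx_lt_of_same_block[OF assms[symmetric]]
    zy_lt_of_same_block[OF assms] zy_lt_of_same_block[OF assms[symmetric]]
  unfolding zdist_def by linarith

fun edges :: "nat \<Rightarrow> tree \<Rightarrow> (nat \<times> nat) list"
and edges_list :: "nat \<Rightarrow> nat \<Rightarrow> tree list \<Rightarrow> (nat \<times> nat) list" where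
  "edges p (Node cs) = edges_list p (Suc p) cs"
| "edges_list p q [] = []"
| "edges_list p q (c # cs) = (p, q) # edges q c @ edges_list p (q + tsize c) cs"

lemma energy_eq_sum_edges:
  "energy p t = (\<Sum>e \<leftarrow> edges p t. zdist (fst e) (snd e))"
  "energy_list p q cs = (\<Sum>e \<leftarrow> edges_list p q cs. zdist (fst e) (snd e))"
  by (induction p t and p q cs rule: energy_energy_list.induct) simp_all

lemma tsize_pos: "0 < tsize t"
  by (cases t) simp

lemma edges_bounds:
  "e \<in> set (edges p t) \<Longrightarrow> p \<le> fst e \<and> fst e < snd e \<and> snd e < p + tsize t"
  "p < q \<Longrightarrow> e \<in> set (edges_list p q cs) \<Longrightarrow>
     p \<le> fst e \<and> fst e < snd e \<and> snd e < q + (\<Sum>c \<leftarrow> cs. tsize c)"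
proof (induction p t and p q cs arbitrary: e and e rule: edges_edges_list.induct)
  case (3 p q c cs)
  have "0 < tsize c"
    by (rule tsize_pos)
  consider (root) "e = (p, q)" | (child) "e \<in> set (edges q c)"
    | (siblings) "e \<in> set (edges_list p (q + tsize c) cs)"
    using "3.prems"(2) by auto
  then show ?case
  proof cases
    case child
    then show ?thesis
      using "3.IH"(1)[OF child] "3.prems"(1) by simp
  next
    case siblings
    then show ?thesis
      using "3.IH"(2)[OF _ siblings] "3.prems"(1) by simp
  qed (use "3.prems"(1) \<open>0 < tsize c\<close> in simp)
qed simp_all

definition crossing :: "nat \<Rightarrow> nat \<times> nat \<Rightarrow> bool" where
  "crossing m e \<longleftrightarrow> fst e < m \<and> m \<le> snd e"

definition short_crossing :: "nat \<Rightarrow> nat \<Rightarrow> nat \<times> nat \<Rightarrow> bool" where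
  "short_crossing B m e \<longleftrightarrow> crossing m e \<and> snd e < fst e + B"

lemma no_crossings_outside:
  assumes "m \<le> q \<or> q + tsize t \<le> m"
  shows "filter (crossing m) (edges q t) = []"
  using assms edges_bounds(1)[of _ q t] by (fastforce simp: filter_empty_conv crossing_def)

lemma crossings_edges_list_le_length:
  assumes "m \<le> q"
  shows "length (filter (crossing m) (edges_list p q cs)) \<le> length cs"
  using assms
proof (induction cs arbitrary: q)
  case (Cons c cs)
  have "length (filter (crossing m) (edges_list p (q + tsize c) cs)) \<le> length cs"
    using Cons by simp
  then show ?case
    using no_crossings_outside[of m q c] Cons.prems by simp
qed simp

lemma no_short_crossings_edges_list_far:
  assumes "m \<le> q" and "p + B \<le> q"
  shows "filter (short_crossing B m) (edges_list p q cs) = []"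
  using assms
proof (induction cs arbitrary: q)
  case (Cons c cs)
  have "filter (short_crossing B m) (edges q c) = []"
    using no_crossings_outside[of m q c] Cons.prems(1)
    by (simp add: short_crossing_def filter_empty_conv)
  moreover have "\<not> short_crossing B m (p, q)"
    using Cons.prems by (simp add: short_crossing_def)
  ultimately show ?case
    using Cons.IH[of "q + tsize c"] Cons.prems by simp
qed simp

lemma length_short_crossings_le:
  "length (filter (short_crossing B m) es) \<le> length (filter (crossing m) es)"
  by (induction es) (auto simp: short_crossing_def)

lemma crossings_edges_list_bound:
  assumes "\<And>c k p. c \<in> set cs \<Longrightarrow> tsize c \<le> 2^k \<Longrightarrow>
             length (filter (crossing m) (edges p c)) \<le> D * (k + 1)"
    and "sorted (map tsize cs)" and "length cs \<le> D" and "(\<Sum>c \<leftarrow> cs. tsize c) < 2^k"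
  shows "length (filter (crossing m) (edges_list p q cs)) \<le> D * (k + 1)"
  using assms
proof (induction cs arbitrary: q)
  case (Cons c cs)
  have "0 < tsize c"
    by (rule tsize_pos)
  consider (left) "m \<le> q" | (right) "q + tsize c \<le> m" | (inside) "q < m" "m < q + tsize c"
    by linarith
  then show ?case
  proof cases
    case left
    have "length (filter (crossing m) (edges_list p q (c # cs))) \<le> D"
      using crossings_edges_list_le_length[OF left, of p "c # cs"] Cons.prems(3) by simp
    then show ?thesis
      by (simp add: order_trans)
  next
    case right
    have "\<not> crossing m (p, q)"
      using right \<open>0 < tsize c\<close> by (simp add: crossing_def)
    moreover have "length (filter (crossing m) (edges_list p (q + tsize c) cs)) \<le> D * (k + 1)"
      using Cons.prems by (intro Cons.IH) auto
    ultimately show ?thesis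
      using no_crossings_outside[of m q c] right by simp
  next
    case inside
    have "\<not> crossing m (p, q)"
      using inside by (simp add: crossing_def)
    have rest: "length (filter (crossing m) (edges_list p (q + tsize c) cs)) \<le> length cs"
      using inside by (intro crossings_edges_list_le_length) simp
    show ?thesis
    proof (cases cs)
      case Nil
      have "length (filter (crossing m) (edges q c)) \<le> D * (k + 1)"
        using Cons.prems(1)[of c k q] Cons.prems(4) Nil by simp
      then show ?thesis
        using Nil \<open>\<not> crossing m (p, q)\<close> by simp
    next
      case (Cons d ds)
      with Cons.prems(2,4) have "2 * tsize c < 2^k"
        by simp
      with \<open>0 < tsize c\<close> obtain k' where k': "k = Suc k'" and "tsize c \<le> 2^k'"
        by (cases k) auto
      then have "length (filter (crossing m) (edges q c)) \<le> D * k"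
        using Cons.prems(1)[of c k' q] k' by simp
      moreover have "length cs + 1 \<le> D"
        using Cons.prems(3) by simp
      ultimately show ?thesis
        using rest \<open>\<not> crossing m (p, q)\<close> by (simp add: algebra_simps)
    qed
  qed
qed simp

lemma crossings_bound:
  "max_children D t \<Longrightarrow> light_first t \<Longrightarrow> tsize t \<le> 2^k \<Longrightarrow>
     length (filter (crossing m) (edges p t)) \<le> D * (k + 1)"
proof (induction t arbitrary: k p)
  case (Node cs)
  have "length (filter (crossing m) (edges_list p (Suc p) cs)) \<le> D * (k + 1)"
    using Node by (intro crossings_edges_list_bound) auto
  then show ?case
    by simp
qed

lemma short_crossings_edges_list_bound:
  assumes "\<And>c p. c \<in> set cs \<Longrightarrow> length (filter (short_crossing B m) (edges p c)) \<le> D * (k + 2)"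
    and "\<And>c. c \<in> set cs \<Longrightarrow> max_children D c \<and> light_first c"
    and "sorted (map tsize cs)" and "length cs \<le> D" and "B \<le> 2^k" and "p \<le> q"
  shows "length (filter (short_crossing B m) (edges_list p q cs)) \<le> D * (k + 2)"
  using assms
proof (induction cs arbitrary: q)
  case (Cons c cs)
  have "0 < tsize c"
    by (rule tsize_pos)
  consider (left) "m \<le> q" | (right) "q + tsize c \<le> m" | (inside) "q < m" "m < q + tsize c"
    by linarith
  then show ?case
  proof cases
    case left
    then have "length (filter (crossing m) (edges_list p q (c # cs))) \<le> D"
      using crossings_edges_list_le_length[of m q p "c # cs"] Cons.prems(4) by simp
    then show ?thesis
      using length_short_crossings_le[of B m "edges_list p q (c # cs)"] by simp
  next
    case right
    have "length (filter (short_crossing B m) (edges q c)) = 0"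
      using no_crossings_outside[of m q c] right length_short_crossings_le[of B m "edges q c"]
      by simp
    moreover have "\<not> short_crossing B m (p, q)"
      using right \<open>0 < tsize c\<close> by (simp add: short_crossing_def crossing_def)
    moreover have "length (filter (short_crossing B m) (edges_list p (q + tsize c) cs)) \<le> D * (k + 2)"
      using Cons.IH[of "q + tsize c"] Cons.prems by simp
    ultimately show ?thesis
      by simp
  next
    case inside
    have not_short: "\<not> short_crossing B m (p, q)"
      using inside by (simp add: short_crossing_def crossing_def)
    have inner: "length (filter (short_crossing B m) (edges q c)) \<le> D * (k + 2)"
      using Cons.prems(1) by simp
    show ?thesis
    proof (cases "cs = [] \<or> B \<le> tsize c")
      case True
      then have "filter (short_crossing B m) (edges_list p (q + tsize c) cs) = []"
        using inside Cons.prems(6) by (auto intro: no_short_crossings_edges_list_far)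
      then show ?thesis
        using not_short inner by simp
    next
      case False
      then have "length (filter (crossing m) (edges q c)) \<le> D * (k + 1)"
        using Cons.prems(2,5) by (intro crossings_bound) auto
      moreover have "length (filter (crossing m) (edges_list p (q + tsize c) cs)) \<le> length cs"
        using inside by (intro crossings_edges_list_le_length) simp
      moreover have "length cs + 1 \<le> D"
        using Cons.prems(4) by simp
      ultimately show ?thesis
        using not_short length_short_crossings_le[of B m "edges q c"]
          length_short_crossings_le[of B m "edges_list p (q + tsize c) cs"]
        by (simp add: algebra_simps)
    qed
  qed
qed simp

lemma short_crossings_bound:
  "max_children D t \<Longrightarrow> light_first t \<Longrightarrow> B \<le> 2^k \<Longrightarrow>
     length (filter (short_crossing B m) (edges p t)) \<le> D * (k + 2)"
proof (induction t arbitrary: p)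
  case (Node cs)
  have "length (filter (short_crossing B m) (edges_list p (Suc p) cs)) \<le> D * (k + 2)"
    using Node by (intro short_crossings_edges_list_bound) auto
  then show ?case
    by simp
qed

definition level_boundaries :: "nat \<Rightarrow> nat \<Rightarrow> nat set" where
  "level_boundaries n L = {m. 0 < m \<and> m < n \<and> 4^L dvd m}"

lemma finite_level_boundaries [simp]: "finite (level_boundaries n L)"
  by (rule finite_subset[of _ "{..<n}"]) (auto simp: level_boundaries_def)

lemma card_level_boundaries: "card (level_boundaries n L) * 4^L \<le> n"
proof -
  let ?N = "(n - 1) div 4^L"
  have "level_boundaries n L \<subseteq> (\<lambda>j. j * 4^L) ` {1..?N}"
  proof
    fix m
    assume "m \<in> level_boundaries n L"
    then have m: "0 < m" "m < n" "4^L dvd m"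
      by (simp_all add: level_boundaries_def)
    then have m_eq: "m = m div 4^L * 4^L"
      by simp
    with m(1) have "m div 4^L \<noteq> 0"
      by (metis mult_0 less_irrefl)
    moreover have "m div 4^L \<le> ?N"
      using m(2) by (intro div_le_mono) simp
    ultimately show "m \<in> (\<lambda>j. j * 4^L) ` {1..?N}"
      using m_eq by (intro image_eqI[where x = "m div 4^L"]) simp_all
  qed
  then have "card (level_boundaries n L) \<le> card ((\<lambda>j. j * 4^L) ` {1..?N})"
    by (intro card_mono) simp_all
  also have "\<dots> \<le> ?N"
    using card_image_le[of "{1..?N}" "\<lambda>j. j * 4^L"] by simp
  finally have "card (level_boundaries n L) * 4^L \<le> ?N * 4^L"
    by simp
  also have "\<dots> \<le> n"
    using div_times_less_eq_dividend[of "n - 1" "4^L"] by linarith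
  finally show ?thesis .
qed

definition charge :: "nat \<Rightarrow> nat \<Rightarrow> nat \<times> nat \<Rightarrow> nat" where
  "charge L m e = (if short_crossing (4^Suc L) m e then 4 * 2^L else 0)"

lemma zdist_le_charges:
  assumes "a < b" and "b < n"
  shows "zdist a b \<le> (\<Sum>L<n. \<Sum>m \<in> level_boundaries n L. charge L m (a, b))"
proof -
  let ?same_block = "\<lambda>K. a div 4^K = b div 4^K"
  have "b < 4^b"
    by (rule power_gt_expt) simp
  then have "?same_block b"
    using assms(1) by simp
  moreover have "\<not> ?same_block 0"
    using assms(1) by simp
  ultimately obtain L where "L < b" and split: "\<not> ?same_block L" and same: "?same_block (Suc L)"
    using ex_least_nat_less[of ?same_block b] by blast
  define m where "m = b div 4^L * 4^L"
  have "a div 4^L < b div 4^L"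
    using split div_le_mono[of a b "4^L"] assms(1) by simp
  then have "a < m"
    by (simp add: m_def div_less_iff_less_mult)
  moreover have "m \<le> b" and "4^L dvd m"
    by (simp_all add: m_def)
  moreover have "b < a + 4^Suc L"
    using lt_add_of_div_eq[OF same[symmetric]] by simp
  ultimately have "m \<in> level_boundaries n L" and "short_crossing (4^Suc L) m (a, b)"
    using assms(2) by (auto simp: level_boundaries_def short_crossing_def crossing_def)
  have "zdist a b < 2 * 2^Suc L"
    by (rule zdist_lt_of_same_block[OF same])
  also have "\<dots> = charge L m (a, b)"
    using \<open>short_crossing (4^Suc L) m (a, b)\<close> by (simp add: charge_def)
  also have "\<dots> \<le> (\<Sum>m' \<in> level_boundaries n L. charge L m' (a, b))"
    using \<open>m \<in> level_boundaries n L\<close> by (intro member_le_sum) simp_all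
  also have "\<dots> \<le> (\<Sum>L' < n. \<Sum>m' \<in> level_boundaries n L'. charge L' m' (a, b))"
    using \<open>L < b\<close> assms(2) by (intro member_le_sum) simp_all
  finally show ?thesis
    by simp
qed

lemma sum_list_sum_swap: "(\<Sum>x \<leftarrow> xs. \<Sum>y \<in> A. f x y) = (\<Sum>y \<in> A. \<Sum>x \<leftarrow> xs. f x y)"
  by (induction xs) (simp_all add: sum.distrib)

lemma sum_list_charge:
  "(\<Sum>e \<leftarrow> es. charge L m e) = 4 * 2^L * length (filter (short_crossing (4^Suc L) m) es)"
  by (induction es) (simp_all add: charge_def)

lemma energy_le_level_sum:
  assumes "max_children D t" and "light_first t"
  shows "energy 0 t \<le>
    (\<Sum>L < tsize t. card (level_boundaries (tsize t) L) * (4 * 2^L * (D * (2 * L + 4))))"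
proof -
  let ?n = "tsize t" and ?es = "edges 0 t"
  have "energy 0 t = (\<Sum>e \<leftarrow> ?es. zdist (fst e) (snd e))"
    by (rule energy_eq_sum_edges)
  also have "\<dots> \<le> (\<Sum>e \<leftarrow> ?es. \<Sum>L < ?n. \<Sum>m \<in> level_boundaries ?n L. charge L m e)"
  proof (rule sum_list_mono)
    fix e
    assume "e \<in> set ?es"
    then show "zdist (fst e) (snd e) \<le> (\<Sum>L < ?n. \<Sum>m \<in> level_boundaries ?n L. charge L m e)"
      using edges_bounds(1)[of e 0 t] zdist_le_charges[of "fst e" "snd e" ?n] by simp
  qed
  also have "\<dots> = (\<Sum>L < ?n. \<Sum>m \<in> level_boundaries ?n L.
                     4 * 2^L * length (filter (short_crossing (4^Suc L) m) ?es))"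
    by (simp add: sum_list_sum_swap sum_list_charge)
  also have "\<dots> \<le> (\<Sum>L < ?n. \<Sum>m \<in> level_boundaries ?n L. 4 * 2^L * (D * (2 * L + 4)))"
  proof (intro sum_mono mult_left_mono)
    fix L m
    have "(4::nat)^Suc L = 2^(2 * L + 2)"
      by (simp add: power_add power_mult)
    then show "length (filter (short_crossing (4^Suc L) m) ?es) \<le> D * (2 * L + 4)"
      using short_crossings_bound[OF assms, of "4^Suc L" "2 * L + 2" m 0]
      by (simp add: algebra_simps)
  qed simp
  finally show ?thesis
    by (simp add: mult.commute)
qed

lemma sum_plus_2_div_pow2: "(\<Sum>L<N. (real L + 2) / 2^L) = 6 - (2 * real N + 6) / 2^N"
proof (induction N)
  case (Suc N)
  have "(2 * real N + 6) / 2^N - (real N + 2) / 2^N = (2 * real (Suc N) + 6) / 2^Suc N"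
    by (simp add: field_simps)
  then show ?case
    using Suc.IH by simp
qed simp

lemma level_sum_le:
  "real (\<Sum>L<n. card (level_boundaries n L) * (4 * 2^L * (D * (2 * L + 4))))
     \<le> 48 * real D * real n"
proof -
  have "real (card (level_boundaries n L) * (4 * 2^L * (D * (2 * L + 4))))
          \<le> 8 * real D * real n * ((real L + 2) / 2^L)" for L
  proof -
    have "real (card (level_boundaries n L) * 4^L) \<le> real n"
      using card_level_boundaries[of n L] by (simp only: of_nat_le_iff)
    then have "real (card (level_boundaries n L)) * (2^L * 2^L) \<le> real n"
      by (simp flip: power_mult_distrib)
    then have "real (card (level_boundaries n L)) * 2^L \<le> real n / 2^L"
      by (simp add: field_simps)
    from mult_right_mono[OF this, of "8 * real D * (real L + 2)"] show ?thesis
      by (simp add: field_simps)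
  qed
  then have "real (\<Sum>L<n. card (level_boundaries n L) * (4 * 2^L * (D * (2 * L + 4))))
               \<le> (\<Sum>L<n. 8 * real D * real n * ((real L + 2) / 2^L))"
    unfolding of_nat_sum by (rule sum_mono)
  also have "\<dots> = 8 * real D * real n * (\<Sum>L<n. (real L + 2) / 2^L)"
    by (rule sum_distrib_left[symmetric])
  also have "\<dots> \<le> 8 * real D * real n * 6"
    by (intro mult_left_mono) (simp_all add: sum_plus_2_div_pow2)
  also have "\<dots> = 48 * real D * real n"
    by simp
  finally show ?thesis .
qed

theorem mainTheorem3:
  "\<forall>\<Delta>::nat. \<Delta> \<ge> 1 \<longrightarrow>
     (\<exists>C::real. \<forall>t. max_children \<Delta> t \<and> light_first t \<longrightarrow>
        real (energy 0 t) \<le> C * real (tsize t))"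
proof (intro allI impI exI)
  fix \<Delta> :: nat and t
  assume "max_children \<Delta> t \<and> light_first t"
  then have "energy 0 t \<le>
    (\<Sum>L < tsize t. card (level_boundaries (tsize t) L) * (4 * 2^L * (\<Delta> * (2 * L + 4))))"
    by (intro energy_le_level_sum) auto
  then show "real (energy 0 t) \<le> 48 * real \<Delta> * real (tsize t)"
    using level_sum_le[of "tsize t" \<Delta>] by linarith
qed

end
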